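(* Consider the noisy Hegselmann–Krause model with homogeneously stubborn agents described in the context, with confidence bound $\epsilon\in(0,1]$ and noise bound $\delta$ satisfying $0<\delta\le\frac{\epsilon}{2(n+1)}$. Suppose that almost surely there is a finite (possibly random) time $T\ge0$ such that $d_{\mathcal{V}}^{B_1}(T):=\max_{i\in\mathcal{V}}|x_i(T)-B_1|\le(n+1)\delta$. Then almost surely $d_{\mathcal{V}}\le 2\delta$ and $d_{\mathcal{V}}^{B_1}\le(n+1)\delta$, where $d_{\mathcal{V}}=\limsup_{t\to\infty}\max_{i,j\in\mathcal{V}}|x_i(t)-x_j(t)|$ and $d_{\mathcal{V}}^{B_1}=\limsup_{t\to\infty}\max_{i\in\mathcal{V}}|x_i(t)-B_1|$.
   Context: Regular agents: $\mathcal{V}=\{1,\dots,n\}$, with opinions $x_i(t)\in[0,1]$, $t=0,1,2,\dots$. Stubborn agents: a finite nonempty index set $\mathcal{B}_1$ disjoint from $\mathcal{V}$, with $x_k(t)\equiv B_1$ for all $k\in\mathcal{B}_1$ and all $t\ge0$, where $B_1\in[0,1]$ is fixed. For $i\in\mathcal{V}$, the neighbor set is $\mathcal{N}(i,x(t))=\{j\in\mathcal{V}\cup\mathcal{B}_1: |x_j(t)-x_i(t)|\le\epsilon\}$ (it contains $i$). The update for $i\in\mathcal{V}$ is $x_i^*(t)=|\mathcal{N}(i,x(t))|^{-1}\sum_{j\in\mathcal{N}(i,x(t))}x_j(t)+\xi_i(t+1)$, and $x_i(t+1)=1$ if $x_i^*(t)>1$, $x_i(t+1)=x_i^*(t)$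 if $x_i^*(t)\in[0,1]$, $x_i(t+1)=0$ if $x_i^*(t)<0$. The noises $\{\xi_i(t)\}_{i\in\mathcal{V},t\ge1}$ are i.i.d. real random variables with $E\xi_1(1)=0$, $E\xi_1(1)^2>0$ and $|\xi_1(1)|\le\delta$ almost surely. *)

theory Defs
  imports "HOL-Probability.Probability"
begin

text \<open>Regular agents are indexed by V = {1..n}, stubborn agents by a finite set K of
  natural numbers disjoint from V. A state is a function y :: nat => real.\<close>

definition hk_nbr :: "nat set \<Rightarrow> nat set \<Rightarrow> real \<Rightarrow> (nat \<Rightarrow> real) \<Rightarrow> nat \<Rightarrow> nat set" where
  "hk_nbr V K eps y i = {j \<in> V \<union> K. \<bar>y j - y i\<bar> \<le> eps}"

definition clip01 :: "real \<Rightarrow> real" where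
  "clip01 z = (if z > 1 then 1 else if z < 0 then 0 else z)"

text \<open>Trajectory of the noisy HK model with stubborn agents: x0 is the initial state
  of the regular agents, B1 the stubborn opinion, xi j t the noise realisation
  of agent j at time t (t >= 1).\<close>

primrec hk_traj :: "nat set \<Rightarrow> nat set \<Rightarrow> real \<Rightarrow> real \<Rightarrow> (nat \<Rightarrow> real)
    \<Rightarrow> (nat \<Rightarrow> nat \<Rightarrow> real) \<Rightarrow> nat \<Rightarrow> nat \<Rightarrow> real" where
  "hk_traj V K B1 eps x0 xi 0 = (\<lambda>j. if j \<in> K then B1 else x0 j)"
| "hk_traj V K B1 eps x0 xi (Suc t) =
     (let y = hk_traj V K B1 eps x0 xi t in
      (\<lambda>j. if j \<in> K then B1
           else if j \<in> V then
             clip01 ((\<Sum>k\<in>hk_nbr V K eps y j. y k) / real (card (hk_nbr V K eps y j))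
                     + xi j (Suc t))
           else y j))"

end

theory Submission
  imports Defs
begin

text \<open>Once every regular agent lies within \<open>(n + 1)\<delta>\<close> of the stubborn opinion \<open>B1\<close>,
  all pairwise distances, including those to the stubborn agents, are at most
  \<open>2(n + 1)\<delta> \<le> \<epsilon>\<close>, so every regular agent hears everybody and moves to the common mean
  plus its own noise. Since the stubborn agents pull the mean towards \<open>B1\<close>, the mean lies within
  \<open>n\<delta>\<close> of \<open>B1\<close>; adding noise of size at most \<open>\<delta>\<close> and clipping to \<open>[0, 1]\<close> (a contraction
  fixing \<open>B1\<close>) keeps every agent within \<open>(n + 1)\<delta>\<close> of \<open>B1\<close>, and any two agents within
  \<open>2\<delta>\<close> of each other. Thus the ball is invariant from the hitting time \<open>T\<close> on, which bounds
  both limsups; the noise bound holds for all agents and times almost surely because the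
  noises are identically distributed.\<close>

lemma clip01_dist_le: "\<bar>clip01 z - clip01 w\<bar> \<le> \<bar>z - w\<bar>"
  unfolding clip01_def by auto

lemma clip01_eq_self: "0 \<le> z \<Longrightarrow> z \<le> 1 \<Longrightarrow> clip01 z = z"
  unfolding clip01_def by auto

lemma hk_traj_stubborn: "k \<in> K \<Longrightarrow> hk_traj V K B1 eps x0 xi t k = B1"
  by (cases t) (auto simp: Let_def)

lemma mean_dist_stubborn_le:
  fixes y :: "nat \<Rightarrow> real"
  assumes "finite A" "finite K" "K \<noteq> {}" "A \<inter> K = {}" "0 \<le> r"
    and "\<And>k. k \<in> K \<Longrightarrow> y k = b"
    and "\<And>k. k \<in> A \<Longrightarrow> \<bar>y k - b\<bar> \<le> r"
  shows "\<bar>(\<Sum>k\<in>A \<union> K. y k) / real (card (A \<union> K)) - b\<bar> \<le> real (card A) * r / (real (card A) + 1)"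
proof -
  have card_ge: "real (card (A \<union> K)) \<ge> real (card A) + 1"
    using assms(1-4) by (simp add: card_Un_disjoint Suc_le_eq card_gt_0_iff)
  have "(\<Sum>k\<in>A \<union> K. y k) / real (card (A \<union> K)) - b = (\<Sum>k\<in>A \<union> K. y k - b) / real (card (A \<union> K))"
    using card_ge by (simp add: sum_subtractf field_simps)
  also have "(\<Sum>k\<in>A \<union> K. y k - b) = (\<Sum>k\<in>A. y k - b)"
    using assms(1,2,6) by (intro sum.mono_neutral_right) auto
  finally have mean_eq: "(\<Sum>k\<in>A \<union> K. y k) / real (card (A \<union> K)) - b
      = (\<Sum>k\<in>A. y k - b) / real (card (A \<union> K))" .
  have "\<bar>\<Sum>k\<in>A. y k - b\<bar> \<le> (\<Sum>k\<in>A. \<bar>y k - b\<bar>)" by (rule sum_abs)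
  also have "\<dots> \<le> real (card A) * r" using sum_mono[of A _ "\<lambda>_. r"] assms(7) by simp
  finally have "\<bar>\<Sum>k\<in>A. y k - b\<bar> / real (card (A \<union> K)) \<le> real (card A) * r / (real (card A) + 1)"
    using card_ge assms(5) by (intro frac_le) auto
  then show ?thesis using mean_eq by simp
qed

lemma hk_nbr_eq_all:
  assumes "\<And>k. k \<in> K \<Longrightarrow> y k = b"
    and "\<And>k. k \<in> V \<Longrightarrow> \<bar>y k - b\<bar> \<le> r"
    and "0 \<le> r" "2 * r \<le> eps" "i \<in> V"
  shows "hk_nbr V K eps y i = V \<union> K"
proof -
  have "\<bar>y j - y i\<bar> \<le> \<bar>y j - b\<bar> + \<bar>y i - b\<bar>" for j by linarith
  moreover have "\<bar>y j - b\<bar> \<le> r" if "j \<in> V \<union> K" for j using that assms(1-3) by auto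
  ultimately show ?thesis using assms(2-5) unfolding hk_nbr_def by fastforce
qed

locale hk_ball_step =
  fixes V K :: "nat set" and B1 eps delta :: real and x0 :: "nat \<Rightarrow> real"
    and xi :: "nat \<Rightarrow> nat \<Rightarrow> real" and t :: nat
  assumes finite_V: "finite V" and finite_K: "finite K" and K_nonempty: "K \<noteq> {}"
    and disjoint: "V \<inter> K = {}"
    and B1_unit: "0 \<le> B1" "B1 \<le> 1"
    and delta_nonneg: "0 \<le> delta" and delta_small: "2 * ((real (card V) + 1) * delta) \<le> eps"
    and noise_bound: "\<And>i. i \<in> V \<Longrightarrow> \<bar>xi i (Suc t)\<bar> \<le> delta"
    and in_ball: "\<And>i. i \<in> V \<Longrightarrow> \<bar>hk_traj V K B1 eps x0 xi t i - B1\<bar> \<le> (real (card V) + 1) * delta"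
begin

abbreviation "y \<equiv> hk_traj V K B1 eps x0 xi t"

definition mean :: real where
  "mean = (\<Sum>k\<in>V \<union> K. y k) / real (card (V \<union> K))"

lemma traj_Suc_eq: "i \<in> V \<Longrightarrow> hk_traj V K B1 eps x0 xi (Suc t) i = clip01 (mean + xi i (Suc t))"
  using hk_nbr_eq_all[of K y B1 V "(real (card V) + 1) * delta" eps i]
    hk_traj_stubborn in_ball delta_nonneg delta_small disjoint
  by (auto simp: mean_def Let_def)

lemma mean_dist_le: "\<bar>mean - B1\<bar> \<le> real (card V) * delta"
proof -
  have "\<bar>mean - B1\<bar> \<le> real (card V) * ((real (card V) + 1) * delta) / (real (card V) + 1)"
    unfolding mean_def using finite_V finite_K K_nonempty disjoint delta_nonneg in_ball
    by (intro mean_dist_stubborn_le) (auto simp: hk_traj_stubborn)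
  then show ?thesis by simp
qed

lemma in_ball_Suc:
  assumes "i \<in> V"
  shows "\<bar>hk_traj V K B1 eps x0 xi (Suc t) i - B1\<bar> \<le> (real (card V) + 1) * delta"
proof -
  have "\<bar>clip01 (mean + xi i (Suc t)) - clip01 B1\<bar> \<le> \<bar>mean - B1\<bar> + \<bar>xi i (Suc t)\<bar>"
    using clip01_dist_le[of "mean + xi i (Suc t)" B1] by linarith
  then show ?thesis
    using traj_Suc_eq assms mean_dist_le noise_bound[OF assms] clip01_eq_self[OF B1_unit]
    by (simp add: algebra_simps)
qed

lemma dist_Suc_le:
  assumes "i \<in> V" "j \<in> V"
  shows "\<bar>hk_traj V K B1 eps x0 xi (Suc t) i - hk_traj V K B1 eps x0 xi (Suc t) j\<bar> \<le> 2 * delta"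
proof -
  have "\<bar>clip01 (mean + xi i (Suc t)) - clip01 (mean + xi j (Suc t))\<bar> \<le> \<bar>xi i (Suc t) - xi j (Suc t)\<bar>"
    using clip01_dist_le[of "mean + xi i (Suc t)" "mean + xi j (Suc t)"] by simp
  then show ?thesis
    unfolding traj_Suc_eq[OF assms(1)] traj_Suc_eq[OF assms(2)]
    using noise_bound[OF assms(1)] noise_bound[OF assms(2)] by linarith
qed

end

lemma hk_traj_in_ball_from:
  assumes "finite V" "finite K" "K \<noteq> {}" "V \<inter> K = {}" "0 \<le> B1" "B1 \<le> 1"
    and "0 \<le> delta" "2 * ((real (card V) + 1) * delta) \<le> eps"
    and noise: "\<And>i t. i \<in> V \<Longrightarrow> \<bar>xi i (Suc t)\<bar> \<le> delta"
    and ball_T: "\<And>i. i \<in> V \<Longrightarrow> \<bar>hk_traj V K B1 eps x0 xi T i - B1\<bar> \<le> (real (card V) + 1) * delta"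
    and "T \<le> t"
  shows "\<forall>i\<in>V. \<bar>hk_traj V K B1 eps x0 xi t i - B1\<bar> \<le> (real (card V) + 1) * delta"
  using \<open>T \<le> t\<close>
proof (induction t rule: dec_induct)
  case base then show ?case using ball_T by blast
next
  case (step t)
  interpret hk_ball_step V K B1 eps delta x0 xi t
    using assms(1-8) noise step.IH by unfold_locales auto
  show ?case using in_ball_Suc by blast
qed

lemma hk_traj_limsup_bounds:
  assumes "finite V" "V \<noteq> {}" "finite K" "K \<noteq> {}" "V \<inter> K = {}" "0 \<le> B1" "B1 \<le> 1"
    and "0 \<le> delta" "2 * ((real (card V) + 1) * delta) \<le> eps"
    and "\<And>i t. i \<in> V \<Longrightarrow> \<bar>xi i (Suc t)\<bar> \<le> delta"
    and "\<exists>T. Max ((\<lambda>i. \<bar>hk_traj V K B1 eps x0 xi T i - B1\<bar>) ` V) \<le> (real (card V) + 1) * delta"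
  shows "limsup (\<lambda>t. ereal (Max ((\<lambda>(i, j). \<bar>hk_traj V K B1 eps x0 xi t i
                                       - hk_traj V K B1 eps x0 xi t j\<bar>) ` (V \<times> V))))
       \<le> ereal (2 * delta)
   \<and> limsup (\<lambda>t. ereal (Max ((\<lambda>i. \<bar>hk_traj V K B1 eps x0 xi t i - B1\<bar>) ` V)))
       \<le> ereal ((real (card V) + 1) * delta)"
proof -
  obtain T where "Max ((\<lambda>i. \<bar>hk_traj V K B1 eps x0 xi T i - B1\<bar>) ` V) \<le> (real (card V) + 1) * delta"
    using assms(11) by blast
  then have ball_from: "\<forall>i\<in>V. \<bar>hk_traj V K B1 eps x0 xi t i - B1\<bar> \<le> (real (card V) + 1) * delta"
    if "T \<le> t" for t
    using hk_traj_in_ball_from[of V K B1 delta eps xi x0 T t] assms(1-10) that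
    by (simp add: Max_le_iff)
  have "eventually (\<lambda>t. ereal (Max ((\<lambda>(i, j). \<bar>hk_traj V K B1 eps x0 xi t i
                                       - hk_traj V K B1 eps x0 xi t j\<bar>) ` (V \<times> V))) \<le> ereal (2 * delta))
          sequentially"
  proof (rule eventually_sequentiallyI[of "Suc T"])
    fix t :: nat assume "Suc T \<le> t"
    then obtain s where s: "t = Suc s" "T \<le> s" by (cases t) auto
    interpret hk_ball_step V K B1 eps delta x0 xi s
      using assms(1,3-10) ball_from[OF s(2)] by unfold_locales auto
    show "ereal (Max ((\<lambda>(i, j). \<bar>hk_traj V K B1 eps x0 xi t i
                                  - hk_traj V K B1 eps x0 xi t j\<bar>) ` (V \<times> V))) \<le> ereal (2 * delta)"
      using dist_Suc_le s(1) assms(1,2) by (auto simp: Max_le_iff)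
  qed
  moreover have "eventually (\<lambda>t. ereal (Max ((\<lambda>i. \<bar>hk_traj V K B1 eps x0 xi t i - B1\<bar>) ` V))
                                \<le> ereal ((real (card V) + 1) * delta)) sequentially"
    using ball_from assms(1,2) by (intro eventually_sequentiallyI[of T]) (auto simp: Max_le_iff)
  ultimately show ?thesis by (simp add: Limsup_bounded)
qed

lemma AE_abs_le_of_identically_distributed:
  fixes X Y :: "'a \<Rightarrow> real"
  assumes "X \<in> borel_measurable M" "Y \<in> borel_measurable M"
    and "distr M borel X = distr M borel Y"
    and "AE \<omega> in M. \<bar>Y \<omega>\<bar> \<le> c"
  shows "AE \<omega> in M. \<bar>X \<omega>\<bar> \<le> c"
proof -
  have sets: "{x \<in> space borel. \<bar>x::real\<bar> \<le> c} \<in> sets borel" by measurable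
  have "AE x in distr M borel Y. \<bar>x\<bar> \<le> c"
    using AE_distr_iff[OF assms(2) sets] assms(4) by simp
  then have "AE x in distr M borel X. \<bar>x\<bar> \<le> c"
    unfolding assms(3) .
  then show ?thesis
    using AE_distr_iff[OF assms(1) sets] by simp
qed

theorem lemma3:
  fixes M :: "'a measure" and n :: nat and K :: "nat set"
    and B1 eps delta :: real and x0 :: "nat \<Rightarrow> real"
    and \<xi> :: "nat \<Rightarrow> nat \<Rightarrow> 'a \<Rightarrow> real"
  assumes "prob_space M"
    and "n \<ge> 1"
    and "finite K" "K \<noteq> {}" "K \<inter> {1..n} = {}"
    and "0 \<le> B1" "B1 \<le> 1"
    and "\<And>i. i \<in> {1..n} \<Longrightarrow> 0 \<le> x0 i \<and> x0 i \<le> 1"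
    and "0 < eps" "eps \<le> 1"
    and "0 < delta" "delta \<le> eps / (2 * (real n + 1))"
    and "\<And>i t. i \<in> {1..n} \<Longrightarrow> t \<ge> 1 \<Longrightarrow> \<xi> i t \<in> borel_measurable M"
    and "prob_space.indep_vars M (\<lambda>_. borel) (\<lambda>(i, t). \<xi> i t) ({1..n} \<times> {1..})"
    and "\<And>i t. i \<in> {1..n} \<Longrightarrow> t \<ge> 1 \<Longrightarrow> distr M borel (\<xi> i t) = distr M borel (\<xi> 1 1)"
    and "prob_space.expectation M (\<xi> 1 1) = 0"
    and "prob_space.expectation M (\<lambda>\<omega>. (\<xi> 1 1 \<omega>)\<^sup>2) > 0"
    and "AE \<omega> in M. \<bar>\<xi> 1 1 \<omega>\<bar> \<le> delta"
    and "AE \<omega> in M. \<exists>T. Max ((\<lambda>i. \<bar>hk_traj {1..n} K B1 eps x0 (\<lambda>j t. \<xi> j t \<omega>) T i - B1\<bar>) ` {1..n})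
                          \<le> (real n + 1) * delta"
  shows "AE \<omega> in M.
     limsup (\<lambda>t. ereal (Max ((\<lambda>(i, j). \<bar>hk_traj {1..n} K B1 eps x0 (\<lambda>j t. \<xi> j t \<omega>) t i
                                       - hk_traj {1..n} K B1 eps x0 (\<lambda>j t. \<xi> j t \<omega>) t j\<bar>) ` ({1..n} \<times> {1..n}))))
       \<le> ereal (2 * delta)
   \<and> limsup (\<lambda>t. ereal (Max ((\<lambda>i. \<bar>hk_traj {1..n} K B1 eps x0 (\<lambda>j t. \<xi> j t \<omega>) t i - B1\<bar>) ` {1..n})))
       \<le> ereal ((real n + 1) * delta)"
proof -
  have "AE \<omega> in M. \<bar>\<xi> i (Suc t) \<omega>\<bar> \<le> delta" if "i \<in> {1..n}" for i t
  proof (rule AE_abs_le_of_identically_distributed)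
    show "\<xi> i (Suc t) \<in> borel_measurable M" "\<xi> 1 1 \<in> borel_measurable M"
      using assms(2,13) that by auto
    show "distr M borel (\<xi> i (Suc t)) = distr M borel (\<xi> 1 1)"
      using assms(15)[OF that] by simp
  qed (rule assms(18))
  then have noise_bounded: "AE \<omega> in M. \<forall>i t. i \<in> {1..n} \<longrightarrow> \<bar>\<xi> i (Suc t) \<omega>\<bar> \<le> delta"
    by (simp add: AE_all_countable)
  have delta_small: "2 * ((real (card {1..n}) + 1) * delta) \<le> eps"
    using assms(12) by (simp add: field_simps)
  show ?thesis
    using noise_bounded assms(19)
  proof eventually_elim
    case (elim \<omega>)
    then show ?case
      using hk_traj_limsup_bounds[of "{1..n}" K B1 delta eps "\<lambda>j t. \<xi> j t \<omega>" x0]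
        assms(2-7,11) delta_small Int_commute[of K "{1..n}"]
      by simp
  qed
qed

end
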